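(* Assume $h$ satisfies Assumptions 1 and 2 and takes values in $[0,1]$, and $\Delta=\{\delta:\|\delta\|_2\le\varepsilon\}$ for a constant $\varepsilon>0$. Suppose $A_{\text{Vanilla}}$ is run for $T$ steps with mini-batch size $b$ and step sizes $\alpha_{w,t}\le c/t$ for some $c>0$. Let $\lambda_{\text{Vanilla}}:=\beta c$. Then $$\mathcal{E}_{\text{gen}}(A_{\text{Vanilla}})\le \frac{b}{n}\Big(1+\frac{1}{\lambda_{\text{Vanilla}}}\Big)\Big(\frac{2L_w c}{b}(\varepsilon\beta n+L)\Big)^{\frac{1}{\lambda_{\text{Vanilla}}+1}}T^{\frac{\lambda_{\text{Vanilla}}}{\lambda_{\text{Vanilla}}+1}}.$$
   Context: Setting: a data point is $z=(x,y)$ drawn from an unknown distribution $\mathcal D$; $w\in W$ (a Euclidean space) is the model parameter and $\delta\in\Delta$ a perturbation; $h(w,\delta;z)$ is the loss. All norms are Euclidean. Define $h_{\max}(w;z)=\max_{\delta\in\Delta}h(w,\delta;z)$, population adversarial risk $R(w)=\mathbb E_{z\sim\mathcal D}[h_{\max}(w;z)]$, and for a dataset $S=(z_1,\dots,z_n)$ of $n$ i.i.d. samples from $\mathcal D$ the empirical adversarial risk $R_S(w)=\frac1n\sum_{j=1}^n h_{\max}(w;z_j)$. For a randomized algorithm $A$ with output $A(S)\in W$, the expected generalization adversarial risk is $\mathcal E_{\text{gen}}(A)=\mathbb E_{S,A}[R(A(S))-R_S(A(S))]$. Assumption 1: for every $z$, and all $w,w'\in W$, $\delta,\delta'\in\Delta$: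 $|h(w,\delta;z)-h(w',\delta';z)|^2\le L^2(\|w-w'\|^2+\|\delta-\delta'\|^2)$ and $|h(w,\delta;z)-h(w',\delta;z)|\le L_w\|w-w'\|$. Assumption 2: for every $z$, $h(\cdot,\cdot;z)$ is continuously differentiable and $\|\nabla_w h(w,\delta;z)-\nabla_w h(w',\delta';z)\|^2+\|\nabla_\delta h(w,\delta;z)-\nabla_\delta h(w',\delta';z)\|^2\le\beta^2(\|w-w'\|^2+\|\delta-\delta'\|^2)$. Algorithm $A_{\text{Vanilla}}$: starting from an initialization $w_0$, for $t=1,\dots,T$: draw a uniformly random mini-batch $B_t\subset S$ of size $b$; for each $z_j\in B_t$ pick $\delta_j\in\arg\max_{\delta\in\Delta}h(w_{t-1},\delta;z_j)$; set $w_t=w_{t-1}-\frac{\alpha_{w,t}}{b}\sum_{z_j\in B_t}\nabla_w h(w_{t-1},\delta_j;z_j)$. Output $w_T$. *)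

theory Defs
  imports "HOL-Probability.Probability"
begin

definition hmax :: "('w \<Rightarrow> 'd::euclidean_space \<Rightarrow> 'z \<Rightarrow> real) \<Rightarrow> real \<Rightarrow> 'w \<Rightarrow> 'z \<Rightarrow> real" where
  "hmax h eps w z = (SUP \<delta>\<in>cball 0 eps. h w \<delta> z)"

definition adv_risk :: "'z measure \<Rightarrow> ('w \<Rightarrow> 'd::euclidean_space \<Rightarrow> 'z \<Rightarrow> real) \<Rightarrow> real \<Rightarrow> 'w \<Rightarrow> real" where
  "adv_risk D h eps w = (\<integral>z. hmax h eps w z \<partial>D)"

definition emp_adv_risk :: "('w \<Rightarrow> 'd::euclidean_space \<Rightarrow> 'z \<Rightarrow> real) \<Rightarrow> real \<Rightarrow> nat \<Rightarrow> (nat \<Rightarrow> 'z) \<Rightarrow> 'w \<Rightarrow> real" where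
  "emp_adv_risk h eps n S w = (\<Sum>j<n. hmax h eps w (S j)) / real n"

definition grad_w :: "('w::euclidean_space \<Rightarrow> 'd \<Rightarrow> 'z \<Rightarrow> real) \<Rightarrow> 'w \<Rightarrow> 'd \<Rightarrow> 'z \<Rightarrow> 'w" where
  "grad_w h w \<delta> z = (SOME g. GDERIV (\<lambda>w'. h w' \<delta> z) w :> g)"

text \<open>Iterates of A_Vanilla for a fixed sequence of mini-batches Bs (index sets, Bs t for t = 1..T),
  with a fixed argmax selection rule sel.\<close>
primrec vanilla_iter ::
  "('w::euclidean_space \<Rightarrow> 'd \<Rightarrow> 'z \<Rightarrow> real) \<Rightarrow> ('w \<Rightarrow> 'z \<Rightarrow> 'd) \<Rightarrow> (nat \<Rightarrow> real) \<Rightarrow> nat \<Rightarrow> 'w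
   \<Rightarrow> (nat \<Rightarrow> 'z) \<Rightarrow> (nat \<Rightarrow> nat set) \<Rightarrow> nat \<Rightarrow> 'w" where
  "vanilla_iter h sel \<alpha> b w0 S Bs 0 = w0"
| "vanilla_iter h sel \<alpha> b w0 S Bs (Suc t) =
     (let w = vanilla_iter h sel \<alpha> b w0 S Bs t
      in w - (\<alpha> (Suc t) / real b) *\<^sub>R (\<Sum>j\<in>Bs (Suc t). grad_w h w (sel w (S j)) (S j)))"

text \<open>All possible mini-batch sequences: for each t = 1..T a subset of the indices {0..n-1} of size b.
  Uniform independent sampling = uniform distribution on this finite set.\<close>
definition batch_seqs :: "nat \<Rightarrow> nat \<Rightarrow> nat \<Rightarrow> (nat \<Rightarrow> nat set) set" where
  "batch_seqs n b T = Pi\<^sub>E {1..T} (\<lambda>_. {B. B \<subseteq> {..<n} \<and> card B = b})"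

definition gen_err_vanilla ::
  "'z measure \<Rightarrow> ('w::euclidean_space \<Rightarrow> 'd::euclidean_space \<Rightarrow> 'z \<Rightarrow> real) \<Rightarrow> real \<Rightarrow> ('w \<Rightarrow> 'z \<Rightarrow> 'd)
   \<Rightarrow> (nat \<Rightarrow> real) \<Rightarrow> nat \<Rightarrow> 'w \<Rightarrow> nat \<Rightarrow> nat \<Rightarrow> real" where
  "gen_err_vanilla D h eps sel \<alpha> b w0 n T =
     (\<integral>S. (\<Sum>Bs\<in>batch_seqs n b T.
              (let wT = vanilla_iter h sel \<alpha> b w0 S Bs T
               in adv_risk D h eps wT - emp_adv_risk h eps n S wT))
           / real (card (batch_seqs n b T))
       \<partial>(PiM {..<n} (\<lambda>_. D)))"

end

theory Submission
  imports Defs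
begin

text \<open>The argument is the uniform-stability method. Replacing one training sample by an independent
  copy leaves the distribution of the dataset unchanged, so the expected generalization gap is an
  average of loss differences between two runs on datasets that differ in one sample, and it suffices
  to bound that difference uniformly. Both runs see the same mini-batches and coincide until the
  differing sample is first drawn, which happens before step \<open>t\<^sub>0\<close> with probability at most
  \<open>t\<^sub>0 b / n\<close>. Afterwards their distance obeys
  \<open>d\<^sub>t\<^sub>+\<^sub>1 \<le> (1 + \<alpha>\<^sub>t \<beta>) d\<^sub>t + \<alpha>\<^sub>t (2 \<beta> \<epsilon> + [i \<in> B\<^sub>t] 2 L / b)\<close>, because the gradient is
  \<open>\<beta>\<close>-Lipschitz in \<open>(w, \<delta>)\<close> and both inner maximisers lie in the \<open>\<epsilon>\<close>-ball. With \<open>\<alpha>\<^sub>t \<le> c / t\<close>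
  the products of the growth factors are at most \<open>(T / t)\<^bsup>\<beta> c\<^esup>\<close>, and choosing \<open>t\<^sub>0\<close> to balance
  the two contributions yields the rate \<open>T\<^bsup>\<beta> c / (\<beta> c + 1)\<^esup>\<close>.\<close>

definition growth_prod :: "real \<Rightarrow> nat \<Rightarrow> nat \<Rightarrow> real" where
  "growth_prod q T t = (\<Prod>k\<in>{t<..T}. 1 + q / real k)"

lemma growth_prod_self [simp]: "growth_prod q T T = 1"
  by (simp add: growth_prod_def)

lemma growth_prod_Suc_left:
  assumes "t < T"
  shows "growth_prod q T t = (1 + q / real (Suc t)) * growth_prod q T (Suc t)"
proof -
  from assms have "{t<..T} = insert (Suc t) {Suc t<..T}" by auto
  then show ?thesis unfolding growth_prod_def by simp
qed

lemma growth_prod_nonneg: "q \<ge> 0 \<Longrightarrow> growth_prod q T t \<ge> 0"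
  unfolding growth_prod_def by (intro prod_nonneg) auto

lemma growth_prod_telescope:
  assumes "t \<le> T"
  shows "q * (\<Sum>s\<in>{t<..T}. growth_prod q T s / real s) = growth_prod q T t - 1"
  using assms
proof (induction t rule: inc_induct)
  case (step t)
  have "{t<..T} = insert (Suc t) {Suc t<..T}" using step by auto
  then have "q * (\<Sum>s\<in>{t<..T}. growth_prod q T s / real s)
      = q * growth_prod q T (Suc t) / real (Suc t) + (growth_prod q T (Suc t) - 1)"
    using step.IH by (simp add: distrib_left)
  also have "\<dots> = growth_prod q T t - 1"
    using growth_prod_Suc_left[of t T q] step.hyps by (simp add: field_simps)
  finally show ?case .
qed simp

lemma one_plus_div_Suc_le_powr:
  fixes q :: real
  assumes q: "q \<ge> 0" and m: "m \<ge> 1"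
  shows "1 + q / real (Suc m) \<le> (real (Suc m) / real m) powr q"
proof -
  have "ln (real m / real (Suc m)) \<le> real m / real (Suc m) - 1"
    using m by (intro ln_le_minus_one) auto
  then have "1 / real (Suc m) \<le> ln (real (Suc m) / real m)"
    using m by (simp add: ln_div field_simps)
  then have "1 + q / real (Suc m) \<le> 1 + q * ln (real (Suc m) / real m)"
    using q by (simp add: mult_left_mono divide_inverse)
  also have "\<dots> \<le> exp (q * ln (real (Suc m) / real m))"
    by (rule exp_ge_add_one_self)
  also have "\<dots> = (real (Suc m) / real m) powr q"
    using m by (simp add: powr_def mult.commute)
  finally show ?thesis .
qed

lemma growth_prod_le_powr:
  assumes q: "q \<ge> 0" and m: "1 \<le> m" "m \<le> T"
  shows "growth_prod q T m \<le> (real T / real m) powr q"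
  using m(2)
proof (induction T rule: dec_induct)
  case (step T)
  have T: "T \<ge> 1" using step m by simp
  have "{m<..Suc T} = insert (Suc T) {m<..T}" using step by auto
  then have "growth_prod q (Suc T) m = (1 + q / real (Suc T)) * growth_prod q T m"
    unfolding growth_prod_def by simp
  also have "\<dots> \<le> (real (Suc T) / real T) powr q * (real T / real m) powr q"
    by (intro mult_mono one_plus_div_Suc_le_powr q T step.IH) (auto simp: growth_prod_nonneg q)
  also have "\<dots> = (real (Suc T) / real m) powr q"
    using T by (simp flip: powr_mult)
  finally show ?case .
qed (use m in simp)

lemma powr_mult_one_plus_le_one:
  fixes s q :: real
  assumes s: "0 < s" "s \<le> 1" and q: "q \<ge> 0"
  shows "s powr q * (1 + q * (1 - s)) \<le> 1"
proof -
  have "s powr q * (1 + q * (1 - s)) \<le> exp (q * ln s) * exp (q * (1 - s))"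
    using s q by (intro mult_mono) (auto simp: powr_def mult.commute)
  also have "\<dots> = exp (q * (ln s - (s - 1)))"
    by (simp add: exp_add[symmetric] algebra_simps)
  also have "\<dots> \<le> 1"
    using s q ln_le_minus_one[of s] by (simp add: mult_nonneg_nonpos)
  finally show ?thesis .
qed

lemma one_plus_div_mult_powr_le:
  fixes q x y :: real
  assumes q: "q \<ge> 0" and x: "0 < x" "x \<le> y" "y \<le> x + 1"
  shows "(1 + q / y) * (x / y) powr q \<le> 1 + q * (x - (y - 1)) / x"
proof -
  define s where "s = x / y"
  have s: "0 < s" "s \<le> 1" using x unfolding s_def by auto
  have "1 - s = (y - x) / y"
    using x unfolding s_def by (simp add: field_simps)
  also have "\<dots> \<le> 1 / y"
    using x by (intro divide_right_mono) auto
  finally have "1 - s \<le> 1 / y" .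
  moreover have "s powr q \<le> 1 / s"
    using s q powr_le1[of q s] order.trans[of "s powr q" 1 "1 / s"] by simp
  ultimately have "q * (1 - s) * (1 / s - s powr q) \<le> q * (1 / y) * (1 / s - s powr q)"
    using q by (intro mult_right_mono mult_left_mono) auto
  moreover have "q * (1 - s) * (1 / s - s powr q) = q / s - q * s powr q - q + q * s powr q * s"
    and "q * (1 / y) * (1 / s - s powr q) = q / (s * y) - q / y * s powr q"
    using s x by (simp_all add: field_simps)
  moreover have "s powr q + q * s powr q - q * s powr q * s \<le> 1"
    using powr_mult_one_plus_le_one[OF s q] by (simp add: algebra_simps)
  ultimately have "s powr q * (1 + q / y) \<le> 1 + q - q / s + q / (s * y)"
    by (simp add: algebra_simps)
  also have "\<dots> = 1 + q * (x - (y - 1)) / x"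
    using x unfolding s_def by (simp add: field_simps)
  finally show ?thesis unfolding s_def by (simp add: mult.commute)
qed

lemma growth_prod_floor_le:
  assumes q: "q \<ge> 0" and x: "0 < x" "x < real T"
  shows "growth_prod q T (nat \<lfloor>x\<rfloor>) \<le> (real T / x) powr q * (1 + q * (x - real (nat \<lfloor>x\<rfloor>)) / x)"
proof -
  define t where "t = nat \<lfloor>x\<rfloor>"
  have t: "real t \<le> x" "x < real (Suc t)" "Suc t \<le> T"
    using x unfolding t_def by linarith+
  have "growth_prod q T t = (1 + q / real (Suc t)) * growth_prod q T (Suc t)"
    using t by (intro growth_prod_Suc_left) auto
  also have "\<dots> \<le> (1 + q / real (Suc t)) * (real T / real (Suc t)) powr q"
    using q t by (intro mult_left_mono growth_prod_le_powr) auto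
  also have "(real T / real (Suc t)) powr q = (x / real (Suc t)) powr q * (real T / x) powr q"
    using x by (simp flip: powr_mult)
  also have "(1 + q / real (Suc t)) * ((x / real (Suc t)) powr q * (real T / x) powr q)
      \<le> (1 + q * (x - (real (Suc t) - 1)) / x) * (real T / x) powr q"
    unfolding mult.assoc[symmetric] using q x t by (intro mult_right_mono one_plus_div_mult_powr_le) auto
  finally show ?thesis unfolding t_def by (simp add: mult.commute)
qed

lemma powr_cutoff_balance:
  fixes q K x :: real and T :: nat
  assumes q: "q \<ge> 0" and K: "K \<ge> 0" and x: "x = K powr (1 / (q + 1)) * real T powr (q / (q + 1))"
    and x_pos: "x > 0"
  shows "K * (real T / x) powr q = x"
proof -
  have "x powr (q + 1) = K * real T powr q"
    unfolding x using q K by (simp add: powr_mult powr_powr)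
  moreover have "x powr (q + 1) = x powr q * x"
    using x_pos by (simp add: powr_add)
  ultimately show ?thesis
    using x_pos by (simp add: powr_divide field_simps)
qed

text \<open>The cutoff is \<open>\<lfloor>x\<rfloor>\<close> for the \<open>x\<close> with \<open>x\<^bsup>q+1\<^esup> = K T\<^sup>q\<close>, which balances the two terms.\<close>

lemma exists_cutoff_growth_prod:
  fixes q K :: real and T :: nat
  assumes q: "q > 0" and K: "K \<ge> 0"
  shows "\<exists>t\<le>T. real t + K / q * (growth_prod q T t - 1)
            \<le> (1 + 1 / q) * (K powr (1 / (q + 1)) * real T powr (q / (q + 1)))"
proof -
  define x where "x = K powr (1 / (q + 1)) * real T powr (q / (q + 1))"
  consider "K = 0" | "K > 0" "real T \<le> x" | "K > 0" "x < real T"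
    using K by linarith
  then show ?thesis
  proof cases
    case 1
    then show ?thesis by (intro exI[of _ 0]) simp
  next
    case 2
    moreover have "0 \<le> x / q"
      using q unfolding x_def by simp
    ultimately have "real T \<le> (1 + 1 / q) * x"
      by (simp add: algebra_simps)
    then show ?thesis unfolding x_def by (intro exI[of _ T]) simp
  next
    case 3
    have "0 \<le> x"
      unfolding x_def by simp
    with 3 have "T > 0"
      by linarith
    then have x_pos: "x > 0"
      using 3 unfolding x_def by simp
    define t where "t = nat \<lfloor>x\<rfloor>"
    have t: "real t \<le> x" "t \<le> T" using x_pos 3 unfolding t_def by linarith+
    have balance: "K * (real T / x) powr q = x"
      using q 3 x_pos by (intro powr_cutoff_balance x_def) auto
    have "real t + K / q * (growth_prod q T t - 1)
        \<le> real t + K / q * ((real T / x) powr q * (1 + q * (x - real t) / x) - 1)"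
      using growth_prod_floor_le[of q x T] q 3 x_pos unfolding t_def
      by (intro add_left_mono mult_left_mono diff_right_mono) auto
    also have "\<dots> = real t + (K * (real T / x) powr q) * (1 / q + (x - real t) / x) - K / q"
      using q x_pos by (simp add: field_simps)
    also have "\<dots> \<le> (1 + 1 / q) * x"
      unfolding balance using q x_pos 3 by (simp add: field_simps)
    finally show ?thesis using t unfolding x_def by blast
  qed
qed

definition round_grid :: "nat \<Rightarrow> 'a::euclidean_space \<Rightarrow> 'a" where
  "round_grid m x = (\<Sum>i\<in>Basis. (real_of_int \<lfloor>real (Suc m) * (x \<bullet> i)\<rfloor> / real (Suc m)) *\<^sub>R i)"

lemma round_grid_inner:
  "i \<in> Basis \<Longrightarrow> round_grid m x \<bullet> i = real_of_int \<lfloor>real (Suc m) * (x \<bullet> i)\<rfloor> / real (Suc m)"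
  unfolding round_grid_def by simp

lemma round_grid_measurable: "round_grid m \<in> borel_measurable borel"
  unfolding round_grid_def by measurable

lemma countable_range_round_grid: "countable (range (round_grid m :: 'a::euclidean_space \<Rightarrow> 'a))"
proof -
  define F :: "('a \<Rightarrow> int) \<Rightarrow> 'a" where
    "F k = (\<Sum>i\<in>Basis. (real_of_int (k i) / real (Suc m)) *\<^sub>R i)" for k
  have "round_grid m x = F (restrict (\<lambda>i. \<lfloor>real (Suc m) * (x \<bullet> i)\<rfloor>) Basis)" for x
    unfolding round_grid_def F_def by (intro sum.cong) auto
  then have "range (round_grid m) \<subseteq> F ` PiE Basis (\<lambda>_. UNIV)"
    by auto
  moreover have "countable (F ` PiE (Basis :: 'a set) (\<lambda>_. UNIV :: int set))"
    by (intro countable_image countable_PiE) auto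
  ultimately show ?thesis by (rule countable_subset)
qed

lemma round_grid_LIMSEQ: "(\<lambda>m. round_grid m x) \<longlonglongrightarrow> (x::'a::euclidean_space)"
proof (rule LIM_zero_cancel, rule Lim_null_comparison)
  show "\<forall>\<^sub>F m in sequentially. norm (round_grid m x - x) \<le> real DIM('a) / real (Suc m)"
  proof (intro always_eventually allI)
    fix m
    have "norm (round_grid m x - x) \<le> (\<Sum>i\<in>Basis. \<bar>(round_grid m x - x) \<bullet> i\<bar>)"
      by (rule norm_le_l1)
    also have "\<dots> \<le> (\<Sum>i\<in>(Basis::'a set). 1 / real (Suc m))"
    proof (intro sum_mono)
      fix i :: 'a assume i: "i \<in> Basis"
      define y where "y = real (Suc m) * (x \<bullet> i)"
      have "(round_grid m x - x) \<bullet> i = (real_of_int \<lfloor>y\<rfloor> - y) / real (Suc m)"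
        using i unfolding y_def by (simp add: round_grid_inner inner_diff_left field_simps)
      moreover have "\<bar>real_of_int \<lfloor>y\<rfloor> - y\<bar> \<le> 1" by linarith
      ultimately show "\<bar>(round_grid m x - x) \<bullet> i\<bar> \<le> 1 / real (Suc m)"
        by (simp add: abs_div divide_right_mono)
    qed
    finally show "norm (round_grid m x - x) \<le> real DIM('a) / real (Suc m)" by simp
  qed
  show "(\<lambda>m. real DIM('a) / real (Suc m)) \<longlonglongrightarrow> 0"
    using tendsto_mult_right_zero[OF LIMSEQ_inverse_real_of_nat] by (simp add: divide_inverse)
qed

text \<open>A Caratheodory function is the pointwise limit of its compositions with the countably-valued
  grid roundings, hence jointly measurable.\<close>

lemma borel_measurable_caratheodory:
  fixes f :: "'a::euclidean_space \<Rightarrow> 'b \<Rightarrow> real"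
  assumes meas: "\<And>x. (\<lambda>y. f x y) \<in> borel_measurable M"
    and cont: "\<And>y. continuous_on UNIV (\<lambda>x. f x y)"
  shows "(\<lambda>p. f (fst p) (snd p)) \<in> borel_measurable (borel \<Otimes>\<^sub>M M)"
proof (rule borel_measurable_LIMSEQ_real[where u="\<lambda>m p. f (round_grid m (fst p)) (snd p)"])
  fix p :: "'a \<times> 'b"
  have "isCont (\<lambda>x. f x (snd p)) (fst p)"
    using cont[of "snd p"] by (simp add: continuous_on_eq_continuous_at)
  then show "(\<lambda>m. f (round_grid m (fst p)) (snd p)) \<longlonglongrightarrow> f (fst p) (snd p)"
    by (rule isCont_tendsto_compose) (rule round_grid_LIMSEQ)
next
  fix m
  have grid: "(\<lambda>p::'a \<times> 'b. round_grid m (fst p)) \<in> measurable (borel \<Otimes>\<^sub>M M) (count_space (range (round_grid m)))"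
  proof (rule measurable_count_space_eq_countable[OF countable_range_round_grid, THEN iffD2], intro conjI ballI)
    fix a' :: 'a
    have "round_grid m -` {a'} \<inter> space borel \<in> sets borel"
      using round_grid_measurable by (rule measurable_sets) simp
    moreover have "(\<lambda>p::'a \<times> 'b. round_grid m (fst p)) -` {a'} \<inter> space (borel \<Otimes>\<^sub>M M)
        = (round_grid m -` {a'} \<inter> space borel) \<times> space M"
      by (auto simp: space_pair_measure)
    ultimately show "(\<lambda>p::'a \<times> 'b. round_grid m (fst p)) -` {a'} \<inter> space (borel \<Otimes>\<^sub>M M) \<in> sets (borel \<Otimes>\<^sub>M M)"
      by simp
  qed auto
  have "(\<lambda>p. f a (snd p)) \<in> borel_measurable (borel \<Otimes>\<^sub>M M)" for a
    using meas[of a] by measurable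
  then show "(\<lambda>p. f (round_grid m (fst p)) (snd p)) \<in> borel_measurable (borel \<Otimes>\<^sub>M M)"
    by (rule measurable_compose_countable'[OF _ grid countable_range_round_grid])
qed

lemma has_derivative_partial_fst:
  assumes D: "((\<lambda>p. f (fst p) (snd p)) has_derivative D) (at (x, y) within UNIV \<times> S)" and y: "y \<in> S"
  shows "((\<lambda>x'. f x' y) has_derivative (\<lambda>u. D (u, 0))) (at x)"
proof -
  have slice: "((\<lambda>x'. (x', y)) has_derivative (\<lambda>u. (u, 0))) (at x)"
    by (auto intro!: derivative_eq_intros)
  have "((\<lambda>p. f (fst p) (snd p)) has_derivative D) (at (x, y) within range (\<lambda>x'. (x', y)))"
    using D by (rule has_derivative_subset) (use y in auto)
  from has_derivative_in_compose[OF slice this] show ?thesis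
    by simp
qed

lemma some_gderiv_eq:
  assumes "(f has_derivative (\<lambda>x. x \<bullet> G)) (at w)"
  shows "(SOME g. GDERIV f w :> g) = G"
proof (rule some_equality)
  show "GDERIV f w :> G" using assms unfolding gderiv_def .
next
  fix g assume "GDERIV f w :> g"
  then have "(\<lambda>x. x \<bullet> g) = (\<lambda>x. x \<bullet> G)"
    using assms unfolding gderiv_def by (rule has_derivative_unique)
  from fun_cong[OF this, of "g - G"] have "(g - G) \<bullet> (g - G) = 0"
    by (simp add: inner_diff_right)
  then show "g = G" by simp
qed

lemma has_derivative_diff_quotient_LIMSEQ:
  fixes f :: "'a::real_inner \<Rightarrow> real"
  assumes "(f has_derivative (\<lambda>x. x \<bullet> g)) (at w)"
  shows "(\<lambda>m. (f (w + (1 / real (Suc m)) *\<^sub>R v) - f w) * real (Suc m)) \<longlonglongrightarrow> v \<bullet> g"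
proof -
  have line: "((\<lambda>t::real. w + t *\<^sub>R v) has_derivative (\<lambda>t. t *\<^sub>R v)) (at 0)"
    by (auto intro!: derivative_eq_intros)
  have "(f has_derivative (\<lambda>x. x \<bullet> g)) (at ((\<lambda>t::real. w + t *\<^sub>R v) 0))"
    using assms by simp
  from has_derivative_compose[OF line this]
  have "((\<lambda>t. f (w + t *\<^sub>R v)) has_derivative (\<lambda>t. (v \<bullet> g) * t)) (at 0)"
    by (simp add: mult.commute)
  then have "((\<lambda>t. (f (w + t *\<^sub>R v) - f w) / t) \<longlongrightarrow> v \<bullet> g) (at 0)"
    using DERIV_D[of "\<lambda>t. f (w + t *\<^sub>R v)" "v \<bullet> g" 0] by (simp add: has_field_derivative_def)
  moreover have "filterlim (\<lambda>m. 1 / real (Suc m)) (at 0) sequentially"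
  proof (subst filterlim_at, intro conjI)
    show "\<forall>\<^sub>F m in sequentially. 1 / real (Suc m) \<in> UNIV \<and> 1 / real (Suc m) \<noteq> 0"
      by simp
    show "(\<lambda>m. 1 / real (Suc m)) \<longlonglongrightarrow> 0"
      using LIMSEQ_inverse_real_of_nat by (simp add: divide_inverse)
  qed
  ultimately have "(\<lambda>m. (f (w + (1 / real (Suc m)) *\<^sub>R v) - f w) / (1 / real (Suc m))) \<longlonglongrightarrow> v \<bullet> g"
    by (rule filterlim_compose)
  then show ?thesis by simp
qed

lemma norm_gradient_le_lipschitz:
  fixes f :: "'a::real_inner \<Rightarrow> real"
  assumes d: "(f has_derivative (\<lambda>x. x \<bullet> g)) (at w)"
    and lip: "\<And>x. \<bar>f x - f w\<bar> \<le> L * norm (x - w)" and L: "L \<ge> 0"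
  shows "norm g \<le> L"
proof -
  let ?q = "\<lambda>m. (f (w + (1 / real (Suc m)) *\<^sub>R g) - f w) * real (Suc m)"
  have "\<bar>?q m\<bar> \<le> L * norm g" for m
    using lip[of "w + (1 / real (Suc m)) *\<^sub>R g"]
    by (simp add: abs_mult pos_le_divide_eq mult.commute del: of_nat_Suc)
  then have "\<bar>g \<bullet> g\<bar> \<le> L * norm g"
    by (intro tendsto_upperbound[OF tendsto_rabs[OF has_derivative_diff_quotient_LIMSEQ[OF d]]])
      (simp_all add: always_eventually)
  then have "norm g * norm g \<le> L * norm g"
    by (simp add: power2_norm_eq_inner[symmetric] power2_eq_square)
  then show ?thesis
    using L by (cases "norm g = 0") (auto simp: mult_le_cancel_right)
qed

text \<open>Replacing coordinate \<open>j\<close> of an i.i.d.\ sample by an independent copy \<open>z\<close> leaves its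
  distribution unchanged.\<close>

lemma integral_replace_one:
  fixes g :: "('i \<Rightarrow> 'z) \<Rightarrow> 'z \<Rightarrow> real"
  assumes D: "prob_space D" and j: "j \<in> I"
    and meas: "(\<lambda>(z, S). g S z) \<in> borel_measurable (D \<Otimes>\<^sub>M PiM I (\<lambda>_. D))"
    and bnd: "\<And>S z. \<bar>g S z\<bar> \<le> B"
  shows "integrable (PiM I (\<lambda>_. D)) (\<lambda>S. \<integral>z. g S z \<partial>D)"
    and "integrable (PiM I (\<lambda>_. D)) (\<lambda>S. g S (S j))"
    and "integrable (D \<Otimes>\<^sub>M PiM I (\<lambda>_. D)) (\<lambda>(z, S). g S z - g (S(j := z)) z)"
    and "(\<integral>S. (\<integral>z. g S z \<partial>D) \<partial>PiM I (\<lambda>_. D)) - (\<integral>S. g S (S j) \<partial>PiM I (\<lambda>_. D))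
           = (\<integral>(z, S). g S z - g (S(j := z)) z \<partial>(D \<Otimes>\<^sub>M PiM I (\<lambda>_. D)))"
proof -
  let ?\<Omega> = "PiM I (\<lambda>_. D)"
  interpret D: prob_space D by (rule D)
  interpret \<Omega>: prob_space ?\<Omega> using D by (intro prob_space_PiM) auto
  interpret P: pair_prob_space D ?\<Omega> ..
  have "(\<lambda>x. (snd x)(j := fst x)) \<in> measurable (D \<Otimes>\<^sub>M ?\<Omega>) ?\<Omega>"
    by (rule measurable_fun_upd[where J=I]) (use j in auto)
  then have upd: "(\<lambda>(z, S). S(j := z)) \<in> measurable (D \<Otimes>\<^sub>M ?\<Omega>) ?\<Omega>"
    by (simp add: case_prod_beta')
  have g_diag: "(\<lambda>S. g S (S j)) \<in> borel_measurable ?\<Omega>"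
    using measurable_comp[OF measurable_Pair[OF measurable_component_singleton[OF j] measurable_ident_sets[OF refl]] meas]
    by (simp add: comp_def)
  have g_upd: "(\<lambda>(z, S). g (S(j := z)) z) \<in> borel_measurable (D \<Otimes>\<^sub>M ?\<Omega>)"
    using measurable_comp[OF upd g_diag] by (simp add: comp_def case_prod_beta')
  have int_g: "integrable (D \<Otimes>\<^sub>M ?\<Omega>) (\<lambda>(z, S). g S z)"
    using bnd by (intro P.integrable_const_bound[OF _ meas, where B=B]) (auto split: prod.split)
  have int_g_upd: "integrable (D \<Otimes>\<^sub>M ?\<Omega>) (\<lambda>(z, S). g (S(j := z)) z)"
    using bnd by (intro P.integrable_const_bound[OF _ g_upd, where B=B]) (auto split: prod.split)
  show "integrable ?\<Omega> (\<lambda>S. \<integral>z. g S z \<partial>D)"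
    using P.integrable_snd[of "\<lambda>z S. g S z"] int_g by simp
  show int_diag: "integrable ?\<Omega> (\<lambda>S. g S (S j))"
    using bnd by (intro \<Omega>.integrable_const_bound[OF _ g_diag, where B=B]) auto
  show "integrable (D \<Otimes>\<^sub>M ?\<Omega>) (\<lambda>(z, S). g S z - g (S(j := z)) z)"
    using Bochner_Integration.integrable_diff[OF int_g int_g_upd] by (simp add: case_prod_beta')
  have "(\<integral>S. (\<integral>z. g S z \<partial>D) \<partial>?\<Omega>) = (\<integral>(z, S). g S z \<partial>(D \<Otimes>\<^sub>M ?\<Omega>))"
    using P.integral_snd[of "\<lambda>z S. g S z"] int_g by simp
  moreover have "(\<integral>S. g S (S j) \<partial>?\<Omega>) = (\<integral>(z, S). g (S(j := z)) z \<partial>(D \<Otimes>\<^sub>M ?\<Omega>))"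
  proof -
    have "distr (D \<Otimes>\<^sub>M ?\<Omega>) ?\<Omega> (\<lambda>(z, S). S(j := z)) = ?\<Omega>"
      using distr_pair_PiM_eq_PiM[of I "\<lambda>_. D" j] D j by (simp add: insert_absorb)
    then have "(\<integral>S. g S (S j) \<partial>?\<Omega>) = (\<integral>x. g ((\<lambda>(z, S). S(j := z)) x) (((\<lambda>(z, S). S(j := z)) x) j) \<partial>(D \<Otimes>\<^sub>M ?\<Omega>))"
      using integral_distr[OF upd g_diag] by simp
    then show ?thesis by (simp add: case_prod_beta')
  qed
  ultimately show "(\<integral>S. (\<integral>z. g S z \<partial>D) \<partial>?\<Omega>) - (\<integral>S. g S (S j) \<partial>?\<Omega>)
      = (\<integral>(z, S). g S z - g (S(j := z)) z \<partial>(D \<Otimes>\<^sub>M ?\<Omega>))"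
    using Bochner_Integration.integral_diff[OF int_g int_g_upd] by (simp add: case_prod_beta')
qed

lemma expected_generalization_gap_le_stability:
  fixes g :: "'k \<Rightarrow> (nat \<Rightarrow> 'z) \<Rightarrow> 'z \<Rightarrow> real"
  assumes D: "prob_space D" and K: "finite K" "K \<noteq> {}" and n: "n > 0"
    and meas: "\<And>k. k \<in> K \<Longrightarrow> (\<lambda>(z, S). g k S z) \<in> borel_measurable (D \<Otimes>\<^sub>M PiM {..<n} (\<lambda>_. D))"
    and bnd: "\<And>k S z. k \<in> K \<Longrightarrow> \<bar>g k S z\<bar> \<le> B"
    and stable: "\<And>j S z. j < n \<Longrightarrow> (\<Sum>k\<in>K. g k S z - g k (S(j := z)) z) / real (card K) \<le> \<gamma>"
  shows "(\<integral>S. (\<Sum>k\<in>K. (\<integral>z. g k S z \<partial>D) - (\<Sum>j<n. g k S (S j)) / real n) / real (card K)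
           \<partial>PiM {..<n} (\<lambda>_. D)) \<le> \<gamma>"
proof -
  let ?\<Omega> = "PiM {..<n} (\<lambda>_. D)" and ?N = "real (card K)"
  let ?risk = "\<lambda>k S. \<integral>z. g k S z \<partial>D" and ?gap = "\<lambda>k j (z, S). g k S z - g k (S(j := z)) z"
  interpret \<Omega>: prob_space ?\<Omega> using D by (intro prob_space_PiM) auto
  interpret D: prob_space D by (rule D)
  interpret P: pair_prob_space D ?\<Omega> ..
  note replace = integral_replace_one[OF D _ meas bnd]
  have int_risk: "integrable ?\<Omega> (?risk k)" if "k \<in> K" for k
    using replace(1)[of 0 k] that n by simp
  have int_emp: "integrable ?\<Omega> (\<lambda>S. g k S (S j))" if "k \<in> K" "j < n" for k j
    using replace(2)[of j k] that by simp
  have int_gap: "integrable (D \<Otimes>\<^sub>M ?\<Omega>) (?gap k j)" if "k \<in> K" "j < n" for k j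
    using replace(3)[of j k] that by simp
  have int_emp_avg: "integrable ?\<Omega> (\<lambda>S. (\<Sum>j<n. g k S (S j)) / real n)" if "k \<in> K" for k
    using int_emp that by (intro integrable_divide_zero Bochner_Integration.integrable_sum) auto
  let ?F = "\<lambda>k S. ?risk k S - (\<Sum>j<n. g k S (S j)) / real n"
  have int_F: "integrable ?\<Omega> (?F k)" if "k \<in> K" for k
    using int_risk int_emp_avg that by (intro Bochner_Integration.integrable_diff)
  have F: "integral\<^sup>L ?\<Omega> (?F k) = (\<Sum>j<n. integral\<^sup>L (D \<Otimes>\<^sub>M ?\<Omega>) (?gap k j)) / real n" if k: "k \<in> K" for k
  proof -
    have "integral\<^sup>L ?\<Omega> (?F k) = integral\<^sup>L ?\<Omega> (?risk k) - (\<Sum>j<n. \<integral>S. g k S (S j) \<partial>?\<Omega>) / real n"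
      using int_emp[OF k]
      by (simp add: Bochner_Integration.integral_diff[OF int_risk[OF k] int_emp_avg[OF k]]
          Bochner_Integration.integral_sum)
    also have "\<dots> = (\<Sum>j<n. integral\<^sup>L ?\<Omega> (?risk k) - (\<integral>S. g k S (S j) \<partial>?\<Omega>)) / real n"
      using n by (simp add: sum_subtractf field_simps)
    finally show ?thesis
      using replace(4) k by simp
  qed
  have "(\<integral>S. (\<Sum>k\<in>K. ?F k S) / ?N \<partial>?\<Omega>) = (\<Sum>k\<in>K. integral\<^sup>L ?\<Omega> (?F k)) / ?N"
    by (simp add: Bochner_Integration.integral_sum int_F)
  also have "\<dots> = (\<Sum>j<n. (\<Sum>k\<in>K. integral\<^sup>L (D \<Otimes>\<^sub>M ?\<Omega>) (?gap k j)) / ?N) / real n"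
    by (simp add: F sum_divide_distrib[symmetric] sum.swap[of _ K])
  also have "\<dots> = (\<Sum>j<n. (\<integral>x. (\<Sum>k\<in>K. ?gap k j x) / ?N \<partial>(D \<Otimes>\<^sub>M ?\<Omega>))) / real n"
    using int_gap by (simp add: Bochner_Integration.integral_sum)
  also have "\<dots> \<le> (\<Sum>j<n. \<gamma>) / real n"
    using int_gap stable n
    by (intro divide_right_mono sum_mono P.integral_le_const AE_I2)
      (auto split: prod.split)
  also have "\<dots> = \<gamma>"
    using n by simp
  finally show ?thesis .
qed

lemma card_subsets_containing:
  assumes A: "finite A" and i: "i \<in> A"
  shows "card {B. B \<subseteq> A \<and> card B = k \<and> i \<in> B} * card A = k * (card A choose k)"
proof (cases k)
  case (Suc k')
  let ?with = "{B. B \<subseteq> A \<and> card B = k \<and> i \<in> B}" and ?without = "{B. B \<subseteq> A - {i} \<and> card B = k}"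
  have split: "{B. B \<subseteq> A \<and> card B = k} = ?with \<union> ?without" and disj: "?with \<inter> ?without = {}"
    by auto
  have fin: "finite ?with" "finite ?without"
    using A by (auto intro: finite_subset[of _ "Pow A"])
  have "card A choose k = card ?with + ((card A - 1) choose k)"
    using n_subsets[OF A, of k] n_subsets[of "A - {i}" k] A i
    by (simp add: split card_Un_disjoint[OF fin disj])
  moreover have "card A choose k = ((card A - 1) choose k') + ((card A - 1) choose k)"
    using choose_reduce_nat[of "card A" k] A i Suc by (auto simp: card_gt_0_iff)
  ultimately have "card ?with = (card A - 1) choose k'" by simp
  then show ?thesis
    using times_binomial_minus1_eq[of k "card A"] Suc by simp
qed (use A in \<open>auto simp: card_eq_0_iff intro: finite_subset\<close>)

lemma card_PiE_filter_coordinate: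
  assumes I: "finite I" "t \<in> I" and F: "finite F"
  shows "card {f \<in> PiE I (\<lambda>_. F). P (f t)} * card F = card {x \<in> F. P x} * card (PiE I (\<lambda>_. F))"
proof -
  have "{f \<in> PiE I (\<lambda>_. F). P (f t)} = PiE I (\<lambda>s. if s = t then {x \<in> F. P x} else F)"
    using I by (auto simp: PiE_iff extensional_def split: if_splits)
  then have "card {f \<in> PiE I (\<lambda>_. F). P (f t)} = (\<Prod>s\<in>I. card (if s = t then {x \<in> F. P x} else F))"
    using I by (simp add: card_PiE)
  also have "\<dots> = card {x \<in> F. P x} * (\<Prod>s\<in>I - {t}. card (if s = t then {x \<in> F. P x} else F))"
    using I by (simp add: prod.remove)
  also have "(\<Prod>s\<in>I - {t}. card (if s = t then {x \<in> F. P x} else F)) = (\<Prod>s\<in>I - {t}. card F)"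
    by (rule prod.cong) auto
  moreover have "card (PiE I (\<lambda>_. F)) = card F * (\<Prod>s\<in>I - {t}. card F)"
    using I by (simp add: card_PiE prod.remove del: prod_constant)
  ultimately show ?thesis by simp
qed

lemma discrete_gronwall:
  fixes d a e :: "nat \<Rightarrow> real"
  assumes rec: "\<And>t. t0 \<le> t \<Longrightarrow> t < T \<Longrightarrow> d (Suc t) \<le> a (Suc t) * d t + e (Suc t)"
    and nonneg: "\<And>t. t0 < t \<Longrightarrow> t \<le> T \<Longrightarrow> 0 \<le> a t"
    and "t0 \<le> T"
  shows "d T \<le> (\<Prod>k\<in>{t0<..T}. a k) * d t0 + (\<Sum>s\<in>{t0<..T}. (\<Prod>k\<in>{s<..T}. a k) * e s)"
  using \<open>t0 \<le> T\<close>
proof (induction T rule: dec_induct)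
  case (step m)
  have prod_Suc: "(\<Prod>k\<in>{s<..Suc m}. a k) = a (Suc m) * (\<Prod>k\<in>{s<..m}. a k)" if "s \<le> m" for s
  proof -
    have "{s<..Suc m} = insert (Suc m) {s<..m}" using that by auto
    then show ?thesis by simp
  qed
  have "d (Suc m) \<le> a (Suc m) * d m + e (Suc m)"
    using rec step.hyps by simp
  also have "\<dots> \<le> a (Suc m) * ((\<Prod>k\<in>{t0<..m}. a k) * d t0 + (\<Sum>s\<in>{t0<..m}. (\<Prod>k\<in>{s<..m}. a k) * e s)) + e (Suc m)"
    using step nonneg by (intro add_right_mono mult_left_mono) auto
  also have "\<dots> = (\<Prod>k\<in>{t0<..Suc m}. a k) * d t0 + (\<Sum>s\<in>{t0<..Suc m}. (\<Prod>k\<in>{s<..Suc m}. a k) * e s)"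
  proof -
    have "(\<Sum>s\<in>{t0<..m}. (\<Prod>k\<in>{s<..Suc m}. a k) * e s) = a (Suc m) * (\<Sum>s\<in>{t0<..m}. (\<Prod>k\<in>{s<..m}. a k) * e s)"
      unfolding sum_distrib_left by (rule sum.cong) (auto simp: prod_Suc)
    moreover have "{t0<..Suc m} = insert (Suc m) {t0<..m}"
      using step.hyps by auto
    ultimately show ?thesis
      using step.hyps by (simp add: prod_Suc algebra_simps)
  qed
  finally show ?case .
qed simp

locale vanilla_adversarial_training =
  fixes D :: "'z measure"
    and h :: "'w::euclidean_space \<Rightarrow> 'd::euclidean_space \<Rightarrow> 'z \<Rightarrow> real"
    and sel :: "'w \<Rightarrow> 'z \<Rightarrow> 'd"
    and \<alpha> :: "nat \<Rightarrow> real"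
    and w0 :: 'w
    and L Lw \<beta> eps c :: real
    and n b T :: nat
  assumes D: "prob_space D"
    and meas_h: "\<And>w \<delta>. (\<lambda>z. h w \<delta> z) \<in> borel_measurable D"
    and meas_sel: "(\<lambda>p. sel (fst p) (snd p)) \<in> borel \<Otimes>\<^sub>M D \<rightarrow>\<^sub>M borel"
    and eps: "eps > 0"
    and range01: "\<And>w \<delta> z. \<delta> \<in> cball 0 eps \<Longrightarrow> 0 \<le> h w \<delta> z \<and> h w \<delta> z \<le> 1"
    and L: "L \<ge> 0" and Lw: "Lw \<ge> 0" and beta: "\<beta> > 0"
    and A1a: "\<And>z w w' \<delta> \<delta>'. \<delta> \<in> cball 0 eps \<Longrightarrow> \<delta>' \<in> cball 0 eps \<Longrightarrow>
               \<bar>h w \<delta> z - h w' \<delta>' z\<bar>\<^sup>2 \<le> L\<^sup>2 * ((norm (w - w'))\<^sup>2 + (norm (\<delta> - \<delta>'))\<^sup>2)"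
    and A1b: "\<And>z w w' \<delta>. \<delta> \<in> cball 0 eps \<Longrightarrow> \<bar>h w \<delta> z - h w' \<delta> z\<bar> \<le> Lw * norm (w - w')"
    and A2: "\<And>z. \<exists>Gw Gd.
               (\<forall>w \<delta>. \<delta> \<in> cball 0 eps \<longrightarrow>
                  ((\<lambda>p. h (fst p) (snd p) z) has_derivative
                     (\<lambda>q. Gw w \<delta> \<bullet> fst q + Gd w \<delta> \<bullet> snd q)) (at (w, \<delta>) within UNIV \<times> cball 0 eps))
             \<and> (\<forall>w w' \<delta> \<delta>'. \<delta> \<in> cball 0 eps \<longrightarrow> \<delta>' \<in> cball 0 eps \<longrightarrow>
                  (norm (Gw w \<delta> - Gw w' \<delta>'))\<^sup>2 + (norm (Gd w \<delta> - Gd w' \<delta>'))\<^sup>2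
                    \<le> \<beta>\<^sup>2 * ((norm (w - w'))\<^sup>2 + (norm (\<delta> - \<delta>'))\<^sup>2))"
    and sel_argmax: "\<And>w z. sel w z \<in> cball 0 eps \<and> (\<forall>\<delta>\<in>cball 0 eps. h w \<delta> z \<le> h w (sel w z) z)"
    and c: "c > 0"
    and step: "\<And>t. 1 \<le> t \<Longrightarrow> 0 \<le> \<alpha> t \<and> \<alpha> t \<le> c / real t"
    and b: "1 \<le> b" "b \<le> n"
begin

abbreviation W :: "(nat \<Rightarrow> 'z) \<Rightarrow> (nat \<Rightarrow> nat set) \<Rightarrow> nat \<Rightarrow> 'w" where
  "W S Bs t \<equiv> vanilla_iter h sel \<alpha> b w0 S Bs t"

abbreviation BS :: "(nat \<Rightarrow> nat set) set" where
  "BS \<equiv> batch_seqs n b T"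

abbreviation adv_grad :: "'w \<Rightarrow> 'z \<Rightarrow> 'w" where
  "adv_grad w z \<equiv> grad_w h w (sel w z) z"

lemma sel_in_cball: "sel w z \<in> cball 0 eps"
  using sel_argmax by blast

lemma h_lipschitz:
  assumes "\<delta> \<in> cball 0 eps" "\<delta>' \<in> cball 0 eps"
  shows "\<bar>h w \<delta> z - h w' \<delta>' z\<bar> \<le> L * dist (w, \<delta>) (w', \<delta>')"
proof (rule power2_le_imp_le)
  show "\<bar>h w \<delta> z - h w' \<delta>' z\<bar>\<^sup>2 \<le> (L * dist (w, \<delta>) (w', \<delta>'))\<^sup>2"
    using A1a[OF assms, where z=z and w=w and w'=w'] by (simp add: dist_norm norm_Pair power_mult_distrib)
qed (use L in simp)

lemma h_lipschitz_w: "\<delta> \<in> cball 0 eps \<Longrightarrow> \<bar>h w \<delta> z - h w' \<delta> z\<bar> \<le> L * norm (w - w')"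
  using h_lipschitz[of \<delta> \<delta> w z w'] by (simp add: dist_Pair_Pair dist_norm)

lemma hmax_eq_sel: "hmax h eps w z = h w (sel w z) z"
  unfolding hmax_def using sel_argmax[of w z] by (intro cSup_eq_maximum) auto

lemma hmax_bounds: "0 \<le> hmax h eps w z" "hmax h eps w z \<le> 1"
  using range01[OF sel_in_cball] by (simp_all add: hmax_eq_sel)

lemma hmax_lipschitz: "\<bar>hmax h eps w z - hmax h eps w' z\<bar> \<le> Lw * norm (w - w')"
proof -
  have "hmax h eps w z \<le> hmax h eps w' z + Lw * norm (w - w')" for w w'
  proof -
    have "hmax h eps w z \<le> h w' (sel w z) z + Lw * norm (w - w')"
      using A1b[OF sel_in_cball[of w z], where z=z and w=w and w'=w'] by (simp add: hmax_eq_sel abs_le_iff)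
    also have "h w' (sel w z) z \<le> hmax h eps w' z"
      using sel_argmax[of w' z] sel_in_cball[of w z] by (simp add: hmax_eq_sel)
    finally show ?thesis by simp
  qed
  from this[of w w'] this[of w' w] show ?thesis
    by (simp add: norm_minus_commute abs_le_iff)
qed

lemma hmax_diff_le_min: "hmax h eps w z - hmax h eps w' z \<le> min 1 (Lw * norm (w - w'))"
  using hmax_lipschitz[of w z w'] hmax_bounds[of w z] hmax_bounds[of w' z] by (simp add: abs_le_iff)

lemma partial_gradient_w:
  obtains Gw :: "'w \<Rightarrow> 'd \<Rightarrow> 'w" and Gd :: "'w \<Rightarrow> 'd \<Rightarrow> 'd" where
    "\<And>w \<delta>. \<delta> \<in> cball 0 eps \<Longrightarrow> ((\<lambda>w'. h w' \<delta> z) has_derivative (\<lambda>x. x \<bullet> Gw w \<delta>)) (at w)"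
    "\<And>w \<delta>. \<delta> \<in> cball 0 eps \<Longrightarrow> grad_w h w \<delta> z = Gw w \<delta>"
    "\<And>w w' \<delta> \<delta>'. \<delta> \<in> cball 0 eps \<Longrightarrow> \<delta>' \<in> cball 0 eps \<Longrightarrow>
       (norm (Gw w \<delta> - Gw w' \<delta>'))\<^sup>2 + (norm (Gd w \<delta> - Gd w' \<delta>'))\<^sup>2
         \<le> \<beta>\<^sup>2 * ((norm (w - w'))\<^sup>2 + (norm (\<delta> - \<delta>'))\<^sup>2)"
proof -
  obtain Gw Gd where G:
    "\<And>w \<delta>. \<delta> \<in> cball 0 eps \<Longrightarrow> ((\<lambda>p. h (fst p) (snd p) z) has_derivative
        (\<lambda>q. Gw w \<delta> \<bullet> fst q + Gd w \<delta> \<bullet> snd q)) (at (w, \<delta>) within UNIV \<times> cball 0 eps)"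
    "\<And>w w' \<delta> \<delta>'. \<delta> \<in> cball 0 eps \<Longrightarrow> \<delta>' \<in> cball 0 eps \<Longrightarrow>
       (norm (Gw w \<delta> - Gw w' \<delta>'))\<^sup>2 + (norm (Gd w \<delta> - Gd w' \<delta>'))\<^sup>2
         \<le> \<beta>\<^sup>2 * ((norm (w - w'))\<^sup>2 + (norm (\<delta> - \<delta>'))\<^sup>2)"
    using A2[of z] by blast
  have deriv: "((\<lambda>w'. h w' \<delta> z) has_derivative (\<lambda>x. x \<bullet> Gw w \<delta>)) (at w)" if "\<delta> \<in> cball 0 eps" for w \<delta>
    using has_derivative_partial_fst[OF G(1)[OF that] that] by (simp add: inner_commute)
  moreover have "grad_w h w \<delta> z = Gw w \<delta>" if "\<delta> \<in> cball 0 eps" for w \<delta>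
    unfolding grad_w_def using deriv[OF that] by (rule some_gderiv_eq)
  ultimately show ?thesis
    using G(2) that by blast
qed

lemma grad_w_has_derivative:
  assumes "\<delta> \<in> cball 0 eps"
  shows "((\<lambda>w'. h w' \<delta> z) has_derivative (\<lambda>x. x \<bullet> grad_w h w \<delta> z)) (at w)"
proof -
  obtain Gw where "\<And>w \<delta>. \<delta> \<in> cball 0 eps \<Longrightarrow> ((\<lambda>w'. h w' \<delta> z) has_derivative (\<lambda>x. x \<bullet> Gw w \<delta>)) (at w)"
    and "\<And>w \<delta>. \<delta> \<in> cball 0 eps \<Longrightarrow> grad_w h w \<delta> z = Gw w \<delta>"
    by (rule partial_gradient_w[of z]) blast
  with assms show ?thesis by simp
qed

lemma grad_w_lipschitz:
  assumes \<delta>: "\<delta> \<in> cball 0 eps" "\<delta>' \<in> cball 0 eps"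
  shows "norm (grad_w h w \<delta> z - grad_w h w' \<delta>' z) \<le> \<beta> * (norm (w - w') + norm (\<delta> - \<delta>'))"
proof (rule partial_gradient_w[of z])
  fix Gw :: "'w \<Rightarrow> 'd \<Rightarrow> 'w" and Gd :: "'w \<Rightarrow> 'd \<Rightarrow> 'd"
  assume G: "\<And>w \<delta>. \<delta> \<in> cball 0 eps \<Longrightarrow> grad_w h w \<delta> z = Gw w \<delta>"
    and lip: "\<And>w w' \<delta> \<delta>'. \<delta> \<in> cball 0 eps \<Longrightarrow> \<delta>' \<in> cball 0 eps \<Longrightarrow>
       (norm (Gw w \<delta> - Gw w' \<delta>'))\<^sup>2 + (norm (Gd w \<delta> - Gd w' \<delta>'))\<^sup>2
         \<le> \<beta>\<^sup>2 * ((norm (w - w'))\<^sup>2 + (norm (\<delta> - \<delta>'))\<^sup>2)"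
  define x where "x = norm (w - w')"
  define y where "y = norm (\<delta> - \<delta>')"
  have "(norm (Gw w \<delta> - Gw w' \<delta>'))\<^sup>2 \<le> \<beta>\<^sup>2 * (x\<^sup>2 + y\<^sup>2)"
    using lip[OF \<delta>, of w w'] zero_le_power2[of "norm (Gd w \<delta> - Gd w' \<delta>')"]
    unfolding x_def y_def by linarith
  also have "\<dots> \<le> \<beta>\<^sup>2 * (x + y)\<^sup>2"
    using mult_nonneg_nonneg[of x y] unfolding x_def y_def
    by (intro mult_left_mono) (simp_all add: power2_sum)
  also have "\<dots> = (\<beta> * (x + y))\<^sup>2"
    by (simp only: power_mult_distrib)
  finally have "norm (Gw w \<delta> - Gw w' \<delta>') \<le> \<beta> * (x + y)"
    by (rule power2_le_imp_le) (use beta in \<open>simp add: x_def y_def\<close>)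
  then show ?thesis
    unfolding G[OF \<delta>(1)] G[OF \<delta>(2)] x_def y_def .
qed

lemma norm_grad_w_le: "\<delta> \<in> cball 0 eps \<Longrightarrow> norm (grad_w h w \<delta> z) \<le> L"
  by (intro norm_gradient_le_lipschitz[OF grad_w_has_derivative] h_lipschitz_w L)

lemma adv_grad_diff_le: "norm (adv_grad w z - adv_grad w' z) \<le> \<beta> * (norm (w - w') + 2 * eps)"
proof -
  have "norm (sel w z - sel w' z) \<le> norm (sel w z) + norm (sel w' z)"
    by (rule norm_triangle_ineq4)
  also have "\<dots> \<le> 2 * eps"
    using sel_in_cball[of w z] sel_in_cball[of w' z] by simp
  finally have "\<beta> * (norm (w - w') + norm (sel w z - sel w' z)) \<le> \<beta> * (norm (w - w') + 2 * eps)"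
    using beta by simp
  with grad_w_lipschitz[OF sel_in_cball sel_in_cball] show ?thesis
    by (rule order.trans)
qed

lemma adv_grad_diff_le_2L: "norm (adv_grad w z - adv_grad w' z') \<le> 2 * L"
  using norm_triangle_ineq4[of "adv_grad w z" "adv_grad w' z'"]
    norm_grad_w_le[OF sel_in_cball[of w z], where w=w and z=z] norm_grad_w_le[OF sel_in_cball[of w' z'], where w=w' and z=z']
  by simp

lemma vanilla_iter_Suc:
  "W S Bs (Suc t) = W S Bs t - (\<alpha> (Suc t) / real b) *\<^sub>R (\<Sum>j\<in>Bs (Suc t). adv_grad (W S Bs t) (S j))"
  by (simp add: Let_def)

lemma vanilla_iter_eq_before_hit:
  assumes S': "\<And>j. j \<noteq> i \<Longrightarrow> S' j = S j" and no_hit: "\<And>s. 1 \<le> s \<Longrightarrow> s \<le> t \<Longrightarrow> i \<notin> Bs s"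
  shows "W S Bs t = W S' Bs t"
  using no_hit
proof (induction t)
  case (Suc t)
  then have eq: "W S Bs t = W S' Bs t" by simp
  have "S' j = S j" if "j \<in> Bs (Suc t)" for j
    using that S'[of j] Suc.prems[of "Suc t"] by auto
  then have "(\<Sum>j\<in>Bs (Suc t). adv_grad (W S Bs t) (S j)) = (\<Sum>j\<in>Bs (Suc t). adv_grad (W S' Bs t) (S' j))"
    unfolding eq by (intro sum.cong) auto
  then show ?case
    unfolding vanilla_iter_Suc eq by simp
qed simp

text \<open>The additive term of the one-step recursion: \<open>2 \<beta> \<epsilon>\<close> from the two inner maximisers, plus
  \<open>2 L / b\<close> when the replaced sample \<open>i\<close> is in the mini-batch.\<close>

definition perturbation :: "(nat \<Rightarrow> nat set) \<Rightarrow> nat \<Rightarrow> nat \<Rightarrow> real" where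
  "perturbation Bs i s = 2 * \<beta> * eps + of_bool (i \<in> Bs s) * (2 * L / real b)"

lemma perturbation_nonneg: "0 \<le> perturbation Bs i s"
  unfolding perturbation_def using beta eps L by simp

lemma norm_batch_grad_diff_le:
  assumes S': "\<And>j. j \<noteq> i \<Longrightarrow> S' j = S j" and B: "finite B"
  shows "norm (\<Sum>j\<in>B. adv_grad w (S j) - adv_grad w' (S' j))
           \<le> real (card B) * (\<beta> * (norm (w - w') + 2 * eps)) + of_bool (i \<in> B) * (2 * L)"
proof -
  have "norm (adv_grad w (S j) - adv_grad w' (S' j)) \<le> \<beta> * (norm (w - w') + 2 * eps) + of_bool (j = i) * (2 * L)" for j
  proof (cases "j = i")
    case True
    have "0 \<le> \<beta> * (norm (w - w') + 2 * eps)"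
      using beta eps by simp
    then show ?thesis
      using adv_grad_diff_le_2L[of w "S j" w' "S' j"] True by simp
  next
    case False
    then show ?thesis using adv_grad_diff_le[of w "S j" w'] S' by simp
  qed
  then have "norm (\<Sum>j\<in>B. adv_grad w (S j) - adv_grad w' (S' j))
      \<le> (\<Sum>j\<in>B. \<beta> * (norm (w - w') + 2 * eps) + of_bool (j = i) * (2 * L))"
    by (intro norm_sum[THEN order.trans] sum_mono)
  also have "\<dots> = real (card B) * (\<beta> * (norm (w - w') + 2 * eps)) + of_bool (i \<in> B) * (2 * L)"
    using B by (simp add: sum.distrib)
  finally show ?thesis .
qed

lemma vanilla_iter_diff_Suc_le:
  assumes S': "\<And>j. j \<noteq> i \<Longrightarrow> S' j = S j" and card: "card (Bs (Suc t)) = b"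
  shows "norm (W S Bs (Suc t) - W S' Bs (Suc t))
           \<le> (1 + \<alpha> (Suc t) * \<beta>) * norm (W S Bs t - W S' Bs t) + \<alpha> (Suc t) * perturbation Bs i (Suc t)"
proof -
  define B where "B = Bs (Suc t)"
  define w where "w = W S Bs t"
  define w' where "w' = W S' Bs t"
  define a where "a = \<alpha> (Suc t)"
  let ?G = "\<Sum>j\<in>B. adv_grad w (S j) - adv_grad w' (S' j)"
  have B: "finite B" "card B = b" "real b > 0"
    using card b unfolding B_def by (auto intro: card_ge_0_finite)
  have a: "a \<ge> 0" using step[of "Suc t"] unfolding a_def by simp
  have "W S Bs (Suc t) - W S' Bs (Suc t) = (w - w') - (a / real b) *\<^sub>R ?G"
    unfolding vanilla_iter_Suc w_def w'_def a_def B_def by (simp add: sum_subtractf scaleR_diff_right)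
  also have "norm \<dots> \<le> norm (w - w') + (a / real b) * norm ?G"
    using norm_triangle_ineq4[of "w - w'" "(a / real b) *\<^sub>R ?G"] a B by simp
  also have "\<dots> \<le> norm (w - w') + (a / real b) * (real b * (\<beta> * (norm (w - w') + 2 * eps)) + of_bool (i \<in> B) * (2 * L))"
    using a B norm_batch_grad_diff_le[OF S' B(1), where w=w and w'=w'] by (intro add_left_mono mult_left_mono) auto
  also have "\<dots> = (1 + a * \<beta>) * norm (w - w') + a * perturbation Bs i (Suc t)"
    using B unfolding perturbation_def B_def by (simp add: field_simps)
  finally show ?thesis unfolding w_def w'_def a_def .
qed

lemma batch_seqs_memD:
  assumes "Bs \<in> BS" "t \<in> {1..T}"
  shows "Bs t \<subseteq> {..<n}" "card (Bs t) = b"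
  using assms unfolding batch_seqs_def by (auto simp: PiE_iff)

lemma prod_step_le_growth_prod: "(\<Prod>k\<in>{s<..T}. 1 + \<alpha> k * \<beta>) \<le> growth_prod (\<beta> * c) T s"
  unfolding growth_prod_def
proof (rule prod_mono)
  fix k assume "k \<in> {s<..T}"
  then have "0 \<le> \<alpha> k" "\<alpha> k \<le> c / real k" using step[of k] by auto
  then show "0 \<le> 1 + \<alpha> k * \<beta> \<and> 1 + \<alpha> k * \<beta> \<le> 1 + \<beta> * c / real k"
    using beta mult_right_mono[of "\<alpha> k" "c / real k" \<beta>] by (simp add: field_simps)
qed

lemma vanilla_iter_diff_le:
  assumes S': "\<And>j. j \<noteq> i \<Longrightarrow> S' j = S j" and Bs: "Bs \<in> BS" and t0: "t0 \<le> T"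
    and no_hit: "\<And>s. 1 \<le> s \<Longrightarrow> s \<le> t0 \<Longrightarrow> i \<notin> Bs s"
  shows "norm (W S Bs T - W S' Bs T)
           \<le> (\<Sum>s\<in>{t0<..T}. growth_prod (\<beta> * c) T s * (c / real s * perturbation Bs i s))"
proof -
  have "norm (W S Bs T - W S' Bs T)
      \<le> (\<Prod>k\<in>{t0<..T}. 1 + \<alpha> k * \<beta>) * norm (W S Bs t0 - W S' Bs t0)
        + (\<Sum>s\<in>{t0<..T}. (\<Prod>k\<in>{s<..T}. 1 + \<alpha> k * \<beta>) * (\<alpha> s * perturbation Bs i s))"
  proof (rule discrete_gronwall[OF _ _ t0])
    fix t assume "t0 \<le> t" "t < T"
    then show "norm (W S Bs (Suc t) - W S' Bs (Suc t))
        \<le> (1 + \<alpha> (Suc t) * \<beta>) * norm (W S Bs t - W S' Bs t) + \<alpha> (Suc t) * perturbation Bs i (Suc t)"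
      using batch_seqs_memD(2)[OF Bs] by (intro vanilla_iter_diff_Suc_le S') auto
  next
    fix t assume "t0 < t"
    then show "0 \<le> 1 + \<alpha> t * \<beta>" using step[of t] beta by simp
  qed
  also have "norm (W S Bs t0 - W S' Bs t0) = 0"
    using vanilla_iter_eq_before_hit[OF S' no_hit] by simp
  also have "(\<Sum>s\<in>{t0<..T}. (\<Prod>k\<in>{s<..T}. 1 + \<alpha> k * \<beta>) * (\<alpha> s * perturbation Bs i s))
      \<le> (\<Sum>s\<in>{t0<..T}. growth_prod (\<beta> * c) T s * (c / real s * perturbation Bs i s))"
  proof (rule sum_mono)
    fix s assume "s \<in> {t0<..T}"
    then have "0 \<le> \<alpha> s" "\<alpha> s \<le> c / real s" using step[of s] by auto
    then show "(\<Prod>k\<in>{s<..T}. 1 + \<alpha> k * \<beta>) * (\<alpha> s * perturbation Bs i s)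
        \<le> growth_prod (\<beta> * c) T s * (c / real s * perturbation Bs i s)"
      using beta c by (intro mult_mono prod_step_le_growth_prod mult_right_mono perturbation_nonneg
          growth_prod_nonneg mult_nonneg_nonneg) auto
  qed
  finally show ?thesis by simp
qed

lemma loss_diff_le_hits:
  assumes S': "\<And>j. j \<noteq> i \<Longrightarrow> S' j = S j" and Bs: "Bs \<in> BS" and t0: "t0 \<le> T"
  shows "min 1 (Lw * norm (W S Bs T - W S' Bs T))
           \<le> (\<Sum>s\<in>{1..t0}. of_bool (i \<in> Bs s))
             + Lw * (\<Sum>s\<in>{t0<..T}. growth_prod (\<beta> * c) T s * (c / real s * perturbation Bs i s))"
    (is "_ \<le> ?hits + Lw * ?R")
proof (cases "\<exists>s\<in>{1..t0}. i \<in> Bs s")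
  case True
  then obtain s where s: "s \<in> {1..t0}" "i \<in> Bs s" by blast
  have "of_bool (i \<in> Bs s) \<le> ?hits"
    by (rule member_le_sum[OF s(1)]) auto
  then have "1 \<le> ?hits" using s by simp
  moreover have "0 \<le> ?R"
    using beta c by (intro sum_nonneg mult_nonneg_nonneg growth_prod_nonneg perturbation_nonneg) auto
  ultimately show ?thesis
    using Lw by (simp add: min.coboundedI1 add_increasing2)
next
  case False
  then have "norm (W S Bs T - W S' Bs T) \<le> ?R"
    by (intro vanilla_iter_diff_le[OF S' Bs t0]) auto
  then have "Lw * norm (W S Bs T - W S' Bs T) \<le> Lw * ?R"
    using Lw by (rule mult_left_mono)
  then show ?thesis
    by (simp add: min.coboundedI2 add_increasing sum_nonneg)
qed

lemma finite_batch_seqs: "finite BS"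
  unfolding batch_seqs_def by (intro finite_PiE) (auto intro: finite_subset[of _ "Pow {..<n}"])

lemma card_batch_seqs_pos: "card BS > 0"
proof -
  have "card {B. B \<subseteq> {..<n} \<and> card B = b} > 0"
    using b by (simp add: n_subsets)
  then have "{B. B \<subseteq> {..<n} \<and> card B = b} \<noteq> {}"
    by (metis card.empty less_irrefl)
  then have "BS \<noteq> {}"
    unfolding batch_seqs_def by (simp add: PiE_eq_empty_iff)
  then show ?thesis
    using finite_batch_seqs by (simp add: card_gt_0_iff)
qed

lemma sum_hit_batch_seqs:
  assumes i: "i < n" and t: "t \<in> {1..T}"
  shows "(\<Sum>Bs\<in>BS. of_bool (i \<in> Bs t)) = real b / real n * real (card BS)"
proof -
  let ?F = "{B. B \<subseteq> {..<n} \<and> card B = b}"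
  have F: "finite ?F" "card ?F > 0"
    using b by (auto intro: finite_subset[of _ "Pow {..<n}"] simp: n_subsets)
  have "{B \<in> ?F. i \<in> B} = {B. B \<subseteq> {..<n} \<and> card B = b \<and> i \<in> B}"
    by auto
  then have hit: "card {B \<in> ?F. i \<in> B} * n = b * card ?F"
    using card_subsets_containing[of "{..<n}" i b] i by (simp add: n_subsets)
  let ?X = "real (card {Bs \<in> BS. i \<in> Bs t})" and ?H = "real (card {B \<in> ?F. i \<in> B})"
  have "card {Bs \<in> BS. i \<in> Bs t} * card ?F = card {B \<in> ?F. i \<in> B} * card BS"
    unfolding batch_seqs_def by (rule card_PiE_filter_coordinate[OF _ t F(1)]) simp
  then have coord: "?X * real (card ?F) = ?H * real (card BS)"
    by (simp flip: of_nat_mult)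
  have "?X * real n * real (card ?F) = (?X * real (card ?F)) * real n"
    by (simp only: mult_ac)
  also have "\<dots> = (?H * real n) * real (card BS)"
    unfolding coord by (simp only: mult_ac)
  also have "\<dots> = real b * real (card BS) * real (card ?F)"
    using hit by (simp flip: of_nat_mult add: mult_ac)
  finally have eq: "?X * real n * real (card ?F) = real b * real (card BS) * real (card ?F)" .
  have "real (card ?F) \<noteq> 0"
    using F(2) by (simp only: of_nat_0_less_iff[symmetric] less_irrefl)
  from mult_right_cancel[OF this] eq have "?X * real n = real b * real (card BS)"
    by (rule iffD1)
  moreover have "BS \<inter> {Bs. i \<in> Bs t} = {Bs \<in> BS. i \<in> Bs t}"
    by blast
  ultimately show ?thesis
    using finite_batch_seqs b by (simp add: field_simps)
qed

lemma sum_perturbation_batch_seqs: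
  assumes "i < n" "s \<in> {1..T}"
  shows "(\<Sum>Bs\<in>BS. perturbation Bs i s) = real (card BS) * (2 * \<beta> * eps + 2 * L / real n)"
proof -
  have "(\<Sum>Bs\<in>BS. perturbation Bs i s)
      = (\<Sum>Bs\<in>BS. 2 * \<beta> * eps) + (\<Sum>Bs\<in>BS. of_bool (i \<in> Bs s)) * (2 * L / real b)"
    unfolding perturbation_def by (simp only: sum.distrib sum_distrib_right)
  also have "\<dots> = real (card BS) * (2 * \<beta> * eps) + real b / real n * real (card BS) * (2 * L / real b)"
    unfolding sum_hit_batch_seqs[OF assms] by simp
  finally show ?thesis
    using b by (simp add: field_simps)
qed

definition stability_bound :: real where
  "stability_bound = real b / real n * (1 + 1 / (\<beta> * c))
     * ((2 * Lw * c / real b) * (eps * \<beta> * real n + L)) powr (1 / (\<beta> * c + 1))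
     * real T powr ((\<beta> * c) / (\<beta> * c + 1))"

lemma sum_loss_diff_bound_batch_seqs:
  assumes i: "i < n" and t0: "t0 \<le> T"
  shows "(\<Sum>Bs\<in>BS. (\<Sum>s\<in>{1..t0}. of_bool (i \<in> Bs s))
            + Lw * (\<Sum>s\<in>{t0<..T}. growth_prod q T s * (c / real s * perturbation Bs i s)))
         = real (card BS) * (real t0 * (real b / real n)
            + Lw * c * (2 * \<beta> * eps + 2 * L / real n) * (\<Sum>s\<in>{t0<..T}. growth_prod q T s / real s))"
    (is "?lhs = _")
proof -
  let ?N = "real (card BS)" and ?P = "growth_prod q T"
  have "?lhs = (\<Sum>s\<in>{1..t0}. \<Sum>Bs\<in>BS. of_bool (i \<in> Bs s))
       + Lw * (\<Sum>s\<in>{t0<..T}. \<Sum>Bs\<in>BS. ?P s * (c / real s * perturbation Bs i s))"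
    by (simp only: sum.distrib sum_distrib_left sum.swap[of _ "{1..t0}"] sum.swap[of _ "{t0<..T}"])
  also have "(\<Sum>s\<in>{1..t0}. \<Sum>Bs\<in>BS. of_bool (i \<in> Bs s)) = real t0 * (real b / real n * ?N)"
    using i t0 by (simp add: sum_hit_batch_seqs)
  also have "(\<Sum>s\<in>{t0<..T}. \<Sum>Bs\<in>BS. ?P s * (c / real s * perturbation Bs i s))
      = (\<Sum>s\<in>{t0<..T}. ?P s / real s) * (c * ?N * (2 * \<beta> * eps + 2 * L / real n))"
    unfolding sum_distrib_right
  proof (rule sum.cong)
    fix s assume "s \<in> {t0<..T}"
    then have "(\<Sum>Bs\<in>BS. perturbation Bs i s) = ?N * (2 * \<beta> * eps + 2 * L / real n)"
      using i t0 by (intro sum_perturbation_batch_seqs) auto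
    moreover have "(\<Sum>Bs\<in>BS. ?P s * (c / real s * perturbation Bs i s))
        = ?P s * (c / real s) * (\<Sum>Bs\<in>BS. perturbation Bs i s)"
      by (simp only: mult.assoc[symmetric] sum_distrib_left[symmetric])
    ultimately show "(\<Sum>Bs\<in>BS. ?P s * (c / real s * perturbation Bs i s))
        = ?P s / real s * (c * ?N * (2 * \<beta> * eps + 2 * L / real n))"
      by simp
  qed simp
  finally show ?thesis
    by (simp add: algebra_simps)
qed

lemma average_loss_diff_le:
  assumes i: "i < n" and S': "\<And>j. j \<noteq> i \<Longrightarrow> S' j = S j"
  shows "(\<Sum>Bs\<in>BS. min 1 (Lw * norm (W S Bs T - W S' Bs T))) / real (card BS) \<le> stability_bound"
proof -
  define q where "q = \<beta> * c"
  define K where "K = (2 * Lw * c / real b) * (eps * \<beta> * real n + L)"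
  have q: "q > 0" unfolding q_def using beta c by simp
  have K: "K \<ge> 0" unfolding K_def using Lw c b eps beta L by simp
  have nb: "real n > 0" "real b > 0" "real (card BS) > 0"
    using b card_batch_seqs_pos by auto
  obtain t0 where t0: "t0 \<le> T"
    and cutoff: "real t0 + K / q * (growth_prod q T t0 - 1)
                   \<le> (1 + 1 / q) * (K powr (1 / (q + 1)) * real T powr (q / (q + 1)))"
    using exists_cutoff_growth_prod[OF q K, of T] by (elim exE conjE) (rule that)
  have "(\<Sum>Bs\<in>BS. min 1 (Lw * norm (W S Bs T - W S' Bs T)))
      \<le> (\<Sum>Bs\<in>BS. (\<Sum>s\<in>{1..t0}. of_bool (i \<in> Bs s))
            + Lw * (\<Sum>s\<in>{t0<..T}. growth_prod q T s * (c / real s * perturbation Bs i s)))"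
    unfolding q_def by (intro sum_mono loss_diff_le_hits[OF S' _ t0])
  also have "\<dots> = real (card BS) * (real b / real n) * (real t0 + K / q * (growth_prod q T t0 - 1))"
    unfolding sum_loss_diff_bound_batch_seqs[OF i t0] growth_prod_telescope[OF t0, of q, symmetric]
    using nb q unfolding K_def by (simp add: field_simps)
  finally have "(\<Sum>Bs\<in>BS. min 1 (Lw * norm (W S Bs T - W S' Bs T))) / real (card BS)
      \<le> real b / real n * (real t0 + K / q * (growth_prod q T t0 - 1))"
    using nb by (simp add: pos_divide_le_eq mult_ac)
  also have "\<dots> \<le> real b / real n * ((1 + 1 / q) * (K powr (1 / (q + 1)) * real T powr (q / (q + 1))))"
    using cutoff nb by (intro mult_left_mono) auto
  finally show ?thesis
    unfolding stability_bound_def q_def K_def by (simp add: mult_ac)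
qed

lemma average_hmax_diff_le:
  assumes "i < n" "\<And>j. j \<noteq> i \<Longrightarrow> S' j = S j"
  shows "(\<Sum>Bs\<in>BS. hmax h eps (W S Bs T) z - hmax h eps (W S' Bs T) z) / real (card BS) \<le> stability_bound"
proof -
  have "(\<Sum>Bs\<in>BS. hmax h eps (W S Bs T) z - hmax h eps (W S' Bs T) z)
      \<le> (\<Sum>Bs\<in>BS. min 1 (Lw * norm (W S Bs T - W S' Bs T)))"
    by (intro sum_mono hmax_diff_le_min)
  then have "(\<Sum>Bs\<in>BS. hmax h eps (W S Bs T) z - hmax h eps (W S' Bs T) z) / real (card BS)
      \<le> (\<Sum>Bs\<in>BS. min 1 (Lw * norm (W S Bs T - W S' Bs T))) / real (card BS)"
    by (rule divide_right_mono) simp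
  also have "\<dots> \<le> stability_bound"
    by (rule average_loss_diff_le[OF assms])
  finally show ?thesis .
qed

text \<open>Composing \<open>h\<close> with the projection onto the perturbation ball makes it globally Lipschitz,
  hence continuous, without changing it on the ball.\<close>

definition h_proj :: "'w \<Rightarrow> 'd \<Rightarrow> 'z \<Rightarrow> real" where
  "h_proj w \<delta> z = h w (closest_point (cball 0 eps) \<delta>) z"

lemma closest_point_in_cball: "closest_point (cball 0 eps) \<delta> \<in> cball 0 eps"
  by (rule closest_point_in_set) (use eps in auto)

lemma continuous_on_h_proj: "continuous_on UNIV (\<lambda>p. h_proj (fst p) (snd p) z)"
proof (rule lipschitz_on_continuous_on, rule lipschitz_onI)
  fix p p' :: "'w \<times> 'd"
  let ?cp = "closest_point (cball 0 eps :: 'd set)"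
  have "dist (?cp (snd p)) (?cp (snd p')) \<le> dist (snd p) (snd p')"
    by (rule closest_point_lipschitz) (use eps in auto)
  then have "dist (fst p, ?cp (snd p)) (fst p', ?cp (snd p')) \<le> dist p p'"
    using dist_Pair_Pair[of "fst p" "snd p" "fst p'" "snd p'"]
    by (simp add: dist_Pair_Pair power_mono)
  moreover have "dist (h_proj (fst p) (snd p) z) (h_proj (fst p') (snd p') z)
      \<le> L * dist (fst p, ?cp (snd p)) (fst p', ?cp (snd p'))"
    unfolding h_proj_def dist_real_def by (rule h_lipschitz[OF closest_point_in_cball closest_point_in_cball])
  ultimately show "dist (h_proj (fst p) (snd p) z) (h_proj (fst p') (snd p') z) \<le> L * dist p p'"
    using L by (meson mult_left_mono order.trans)
qed (rule L)

lemma h_sel_measurable: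
  assumes u: "u \<in> borel_measurable (borel \<Otimes>\<^sub>M D)"
  shows "(\<lambda>x. h (u x) (sel (fst x) (snd x)) (snd x)) \<in> borel_measurable (borel \<Otimes>\<^sub>M D)"
proof -
  have "(\<lambda>z. h_proj (fst p) (snd p) z) \<in> borel_measurable D" for p :: "'w \<times> 'd"
    unfolding h_proj_def by (rule meas_h)
  from borel_measurable_caratheodory[OF this continuous_on_h_proj]
  have h_proj: "(\<lambda>x. h_proj (fst (fst x)) (snd (fst x)) (snd x)) \<in> borel_measurable ((borel :: ('w \<times> 'd) measure) \<Otimes>\<^sub>M D)"
    by simp
  have "(\<lambda>x. (u x, sel (fst x) (snd x))) \<in> measurable (borel \<Otimes>\<^sub>M D) (borel :: ('w \<times> 'd) measure)"
    using measurable_Pair[OF u meas_sel] by (simp add: borel_prod)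
  then have "(\<lambda>x. ((u x, sel (fst x) (snd x)), snd x)) \<in> measurable (borel \<Otimes>\<^sub>M D) ((borel :: ('w \<times> 'd) measure) \<Otimes>\<^sub>M D)"
    by (rule measurable_Pair[OF _ measurable_snd])
  from measurable_comp[OF this h_proj]
  have "(\<lambda>x. h_proj (u x) (sel (fst x) (snd x)) (snd x)) \<in> borel_measurable (borel \<Otimes>\<^sub>M D)"
    by (simp add: comp_def)
  then show ?thesis
    by (simp add: h_proj_def closest_point_self[OF sel_in_cball])
qed

lemma hmax_measurable: "(\<lambda>x. hmax h eps (fst x) (snd x)) \<in> borel_measurable (borel \<Otimes>\<^sub>M D)"
  using h_sel_measurable[OF measurable_fst] by (simp add: hmax_eq_sel)

lemma adv_grad_measurable: "(\<lambda>x. adv_grad (fst x) (snd x)) \<in> borel_measurable (borel \<Otimes>\<^sub>M D)"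
proof (subst borel_measurable_euclidean_space, intro ballI)
  fix i :: 'w assume "i \<in> Basis"
  let ?h = "\<lambda>v x. h v (sel (fst x) (snd x)) (snd x)"
  show "(\<lambda>x. adv_grad (fst x) (snd x) \<bullet> i) \<in> borel_measurable (borel \<Otimes>\<^sub>M D)"
  proof (rule borel_measurable_LIMSEQ_real[where u="\<lambda>m x. (?h (fst x + (1 / real (Suc m)) *\<^sub>R i) x - ?h (fst x) x) * real (Suc m)"])
    fix x :: "'w \<times> 'z"
    show "(\<lambda>m. (?h (fst x + (1 / real (Suc m)) *\<^sub>R i) x - ?h (fst x) x) * real (Suc m))
        \<longlonglongrightarrow> adv_grad (fst x) (snd x) \<bullet> i"
    proof -
      have "((\<lambda>v. h v (sel (fst x) (snd x)) (snd x)) has_derivative (\<lambda>v. v \<bullet> adv_grad (fst x) (snd x))) (at (fst x))"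
        by (rule grad_w_has_derivative[OF sel_in_cball])
      from has_derivative_diff_quotient_LIMSEQ[OF this, of i] show ?thesis
        by (simp add: inner_commute)
    qed
  next
    fix m
    have "(\<lambda>x. ?h (fst x + (1 / real (Suc m)) *\<^sub>R i) x) \<in> borel_measurable (borel \<Otimes>\<^sub>M D)"
      by (rule h_sel_measurable) measurable
    moreover have "(\<lambda>x. ?h (fst x) x) \<in> borel_measurable (borel \<Otimes>\<^sub>M D)"
      by (rule h_sel_measurable[OF measurable_fst])
    ultimately show "(\<lambda>x. (?h (fst x + (1 / real (Suc m)) *\<^sub>R i) x - ?h (fst x) x) * real (Suc m))
        \<in> borel_measurable (borel \<Otimes>\<^sub>M D)"
      by measurable
  qed
qed

lemma vanilla_iter_measurable:
  assumes Bs: "Bs \<in> BS" and t: "t \<le> T"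
  shows "(\<lambda>S. W S Bs t) \<in> borel_measurable (PiM {..<n} (\<lambda>_. D))"
  using t
proof (induction t)
  case (Suc t)
  then have IH: "(\<lambda>S. W S Bs t) \<in> borel_measurable (PiM {..<n} (\<lambda>_. D))" by simp
  have "(\<lambda>S. adv_grad (W S Bs t) (S j)) \<in> borel_measurable (PiM {..<n} (\<lambda>_. D))"
    if "j \<in> Bs (Suc t)" for j
  proof -
    have "j \<in> {..<n}" using that batch_seqs_memD(1)[OF Bs, of "Suc t"] Suc.prems by auto
    then have "(\<lambda>S. (W S Bs t, S j)) \<in> measurable (PiM {..<n} (\<lambda>_. D)) (borel \<Otimes>\<^sub>M D)"
      by (intro measurable_Pair IH measurable_component_singleton)
    from measurable_comp[OF this adv_grad_measurable] show ?thesis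
      by (simp add: comp_def)
  qed
  then show ?case
    unfolding vanilla_iter_Suc using IH by measurable
qed simp

theorem gen_err_le_stability_bound: "gen_err_vanilla D h eps sel \<alpha> b w0 n T \<le> stability_bound"
proof -
  let ?g = "\<lambda>Bs S z. hmax h eps (W S Bs T) z"
  have "gen_err_vanilla D h eps sel \<alpha> b w0 n T
      = (\<integral>S. (\<Sum>Bs\<in>BS. (\<integral>z. ?g Bs S z \<partial>D) - (\<Sum>j<n. ?g Bs S (S j)) / real n) / real (card BS)
           \<partial>PiM {..<n} (\<lambda>_. D))"
    unfolding gen_err_vanilla_def adv_risk_def emp_adv_risk_def Let_def ..
  also have "\<dots> \<le> stability_bound"
  proof (rule expected_generalization_gap_le_stability[OF D finite_batch_seqs])
    show "BS \<noteq> {}" "0 < n"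
      using card_batch_seqs_pos b by auto
  next
    fix Bs assume "Bs \<in> BS"
    from vanilla_iter_measurable[OF this order_refl]
    have "(\<lambda>(z, S). (W S Bs T, z)) \<in> measurable (D \<Otimes>\<^sub>M PiM {..<n} (\<lambda>_. D)) (borel \<Otimes>\<^sub>M D)"
      using measurable_Pair[OF measurable_comp[OF measurable_snd] measurable_fst]
      by (simp add: comp_def case_prod_beta')
    from measurable_comp[OF this hmax_measurable]
    show "(\<lambda>(z, S). ?g Bs S z) \<in> borel_measurable (D \<Otimes>\<^sub>M PiM {..<n} (\<lambda>_. D))"
      by (simp add: comp_def case_prod_beta')
  next
    show "\<bar>?g Bs S z\<bar> \<le> 1" for Bs S z
      using hmax_bounds[of "W S Bs T" z] by simp
  next
    fix j S z assume "j < n"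
    then show "(\<Sum>Bs\<in>BS. ?g Bs S z - ?g Bs (S(j := z)) z) / real (card BS) \<le> stability_bound"
      by (rule average_hmax_diff_le) simp
  qed
  finally show ?thesis .
qed

end

theorem theorem2:
  fixes D :: "'z measure"
    and h :: "'w::euclidean_space \<Rightarrow> 'd::euclidean_space \<Rightarrow> 'z \<Rightarrow> real"
    and sel :: "'w \<Rightarrow> 'z \<Rightarrow> 'd"
    and \<alpha> :: "nat \<Rightarrow> real"
    and w0 :: 'w
    and L Lw \<beta> eps c :: real
    and n b T :: nat
  assumes D: "prob_space D"
    and meas_h: "\<And>w \<delta>. (\<lambda>z. h w \<delta> z) \<in> borel_measurable D"
    and meas_sel: "(\<lambda>p. sel (fst p) (snd p)) \<in> borel \<Otimes>\<^sub>M D \<rightarrow>\<^sub>M borel"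
    and eps: "eps > 0"
    and range01: "\<And>w \<delta> z. \<delta> \<in> cball 0 eps \<Longrightarrow> 0 \<le> h w \<delta> z \<and> h w \<delta> z \<le> 1"
    and L: "L \<ge> 0" and Lw: "Lw \<ge> 0" and beta: "\<beta> > 0"
    and A1a: "\<And>z w w' \<delta> \<delta>'. \<delta> \<in> cball 0 eps \<Longrightarrow> \<delta>' \<in> cball 0 eps \<Longrightarrow>
               \<bar>h w \<delta> z - h w' \<delta>' z\<bar>\<^sup>2 \<le> L\<^sup>2 * ((norm (w - w'))\<^sup>2 + (norm (\<delta> - \<delta>'))\<^sup>2)"
    and A1b: "\<And>z w w' \<delta>. \<delta> \<in> cball 0 eps \<Longrightarrow> \<bar>h w \<delta> z - h w' \<delta> z\<bar> \<le> Lw * norm (w - w')"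
    and A2: "\<And>z. \<exists>Gw Gd.
               (\<forall>w \<delta>. \<delta> \<in> cball 0 eps \<longrightarrow>
                  ((\<lambda>p. h (fst p) (snd p) z) has_derivative
                     (\<lambda>q. Gw w \<delta> \<bullet> fst q + Gd w \<delta> \<bullet> snd q)) (at (w, \<delta>) within UNIV \<times> cball 0 eps))
             \<and> (\<forall>w w' \<delta> \<delta>'. \<delta> \<in> cball 0 eps \<longrightarrow> \<delta>' \<in> cball 0 eps \<longrightarrow>
                  (norm (Gw w \<delta> - Gw w' \<delta>'))\<^sup>2 + (norm (Gd w \<delta> - Gd w' \<delta>'))\<^sup>2
                    \<le> \<beta>\<^sup>2 * ((norm (w - w'))\<^sup>2 + (norm (\<delta> - \<delta>'))\<^sup>2))"
    and sel_argmax: "\<And>w z. sel w z \<in> cball 0 eps \<and> (\<forall>\<delta>\<in>cball 0 eps. h w \<delta> z \<le> h w (sel w z) z)"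
    and c: "c > 0"
    and step: "\<And>t. 1 \<le> t \<Longrightarrow> 0 \<le> \<alpha> t \<and> \<alpha> t \<le> c / real t"
    and b: "1 \<le> b" "b \<le> n"
  shows "gen_err_vanilla D h eps sel \<alpha> b w0 n T
           \<le> real b / real n * (1 + 1 / (\<beta> * c))
             * ((2 * Lw * c / real b) * (eps * \<beta> * real n + L)) powr (1 / (\<beta> * c + 1))
             * real T powr ((\<beta> * c) / (\<beta> * c + 1))"
proof -
  interpret vanilla_adversarial_training D h sel \<alpha> w0 L Lw \<beta> eps c n b T
    by (rule vanilla_adversarial_training.intro; fact)
  show ?thesis
    using gen_err_le_stability_bound unfolding stability_bound_def .
qed

end
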